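(* Let $n\ge2$, $q_1,q_2\in\mathbb{C}$ with $q_1q_2\ne0$ and $q=-q_2/q_1$ not a root of unity. Let $G=\rho(B_n)\subseteq\mathrm{GL}(\mathbf{F})$ be the image of the reduced Burau representation and $\overline{G}$ its Zariski closure in $\mathrm{GL}(\mathbf{F})$. Suppose $q_1^{n-2}q_2$ is not a root of unity. Then for every $g\in G$ and every nonzero $z\in\mathbb{C}$, $zg\in\overline{G}$.
   Context: Artin's braid group $B_n$ has generators $\sigma_1,\dots,\sigma_{n-1}$ with the braid relations. $\mathbf{E}=\mathbb{C}^n$ with basis $e_1,\dots,e_n$ carries the generalized Burau representation $\sigma_ie_j=q_1e_j$ ($j\ne i,i+1$), $\sigma_ie_{i+1}=-q_2e_i$, $\sigma_ie_i=(q_1+q_2)e_i+q_1e_{i+1}$; $\mathbf{F}=\mathrm{span}\{q_2e_i+q_1e_{i+1}:1\le i\le n-1\}$ is an $(n-1)$-dimensional $B_n$-submodule and $\rho:B_n\to\mathrm{GL}(\mathbf{F})$ is the resulting action. *)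

theory Defs
  imports "Jordan_Normal_Form.Matrix" "Jordan_Normal_Form.Determinant"
begin

(* Indices are 0-based: the basis e_1..e_n of E = C^n is e_0..e_{n-1} here, and the
   generator sigma_i (1 <= i <= n-1) of B_n is indexed by i-1 in {0..<n-1}. *)

(* Matrix of the generalized Burau action of sigma_(i+1) on E = C^n (columns = images of e_j):
   sigma e_j = q1 e_j (j \<noteq> i,i+1), sigma e_(i+1) = -q2 e_i, sigma e_i = (q1+q2) e_i + q1 e_(i+1). *)
definition burau_mat :: "nat \<Rightarrow> complex \<Rightarrow> complex \<Rightarrow> nat \<Rightarrow> complex mat" where
  "burau_mat n q1 q2 i = mat n n (\<lambda>(r, c).
      if c = i then (if r = i then q1 + q2 else if r = i + 1 then q1 else 0)
      else if c = i + 1 then (if r = i then - q2 else 0)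
      else if r = c then q1 else 0)"

(* n x (n-1) matrix whose j-th column is f_j = q2 e_j + q1 e_(j+1), the spanning vectors of F *)
definition F_basis :: "nat \<Rightarrow> complex \<Rightarrow> complex \<Rightarrow> complex mat" where
  "F_basis n q1 q2 = mat n (n - 1) (\<lambda>(r, j).
      if r = j then q2 else if r = j + 1 then q1 else 0)"

(* rho(sigma_(i+1)) in GL(F), written in the basis f_0..f_(n-2) of F:
   the (n-1)x(n-1) matrix M with  burau * [f_0 .. f_(n-2)] = [f_0 .. f_(n-2)] * M *)
definition rho_gen :: "nat \<Rightarrow> complex \<Rightarrow> complex \<Rightarrow> nat \<Rightarrow> complex mat" where
  "rho_gen n q1 q2 i = (THE M. M \<in> carrier_mat (n - 1) (n - 1) \<and>
      burau_mat n q1 q2 i * F_basis n q1 q2 = F_basis n q1 q2 * M)"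

(* G = rho(B_n): the subgroup of GL(F) generated by the rho(sigma_i)
   (B_n is generated by the sigma_i, so its image is generated by their images). *)
inductive_set burau_image :: "nat \<Rightarrow> complex \<Rightarrow> complex \<Rightarrow> complex mat set"
  for n q1 q2 where
  one: "1\<^sub>m (n - 1) \<in> burau_image n q1 q2"
| gen: "g \<in> burau_image n q1 q2 \<Longrightarrow> i < n - 1 \<Longrightarrow> rho_gen n q1 q2 i * g \<in> burau_image n q1 q2"
| gen_inv: "g \<in> burau_image n q1 q2 \<Longrightarrow> i < n - 1 \<Longrightarrow> h \<in> carrier_mat (n - 1) (n - 1) \<Longrightarrow>
     inverts_mat h (rho_gen n q1 q2 i) \<Longrightarrow> h * g \<in> burau_image n q1 q2"

inductive_set poly_fun :: "nat \<Rightarrow> (complex mat \<Rightarrow> complex) set" for N where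
  const: "(\<lambda>A. c) \<in> poly_fun N"
| entry: "i < N \<Longrightarrow> j < N \<Longrightarrow> (\<lambda>A. A $$ (i, j)) \<in> poly_fun N"
| add: "p \<in> poly_fun N \<Longrightarrow> p' \<in> poly_fun N \<Longrightarrow> (\<lambda>A. p A + p' A) \<in> poly_fun N"
| mult: "p \<in> poly_fun N \<Longrightarrow> p' \<in> poly_fun N \<Longrightarrow> (\<lambda>A. p A * p' A) \<in> poly_fun N"

(* Zariski closure of S inside GL_N(C): GL_N is the principal open set det \<noteq> 0 of the
   matrix space, so its closed sets are the traces of zero sets of polynomials in the entries. *)
definition zariski_closure_GL :: "nat \<Rightarrow> complex mat set \<Rightarrow> complex mat set" where
  "zariski_closure_GL N S = {A \<in> carrier_mat N N. det A \<noteq> 0 \<and>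
      (\<forall>p \<in> poly_fun N. (\<forall>B \<in> S. p B = 0) \<longrightarrow> p A = 0)}"

definition root_of_unity :: "complex \<Rightarrow> bool" where
  "root_of_unity z \<longleftrightarrow> (\<exists>k::nat. k > 0 \<and> z ^ k = 1)"

end

theory Submission
  imports Defs "HOL-Computational_Algebra.Polynomial"
begin

(* In the basis f_0, ..., f_(n-2) of F, the image of delta = sigma_(n-1) ... sigma_1 is
   -q1^(n-2) q2 times a map of order n (a cyclic shift of n homogeneous coordinates taken
   modulo the constants), so rho(delta)^n is the scalar c = (-q1^(n-2) q2)^n, which is not a
   root of unity.  Hence G is stable under multiplication by all powers of c.  If a polynomial
   p vanishes on G and g \<in> G, then z \<mapsto> p (z g) is a polynomial in z vanishing at the
   infinitely many points c^k, so it vanishes identically. *)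

lemma mat_eq_by_mult_vec:
  fixes A B :: "'a :: comm_ring_1 mat"
  assumes A: "A \<in> carrier_mat nr nc" and B: "B \<in> carrier_mat nr nc"
    and eq: "\<And>x. A *\<^sub>v vec nc x = B *\<^sub>v vec nc x"
  shows "A = B"
proof (rule eq_matI)
  fix i j assume i: "i < dim_row B" and j: "j < dim_col B"
  have unit: "unit_vec nc j = vec nc (\<lambda>k. if k = j then 1 else 0)"
    by (auto simp: unit_vec_def)
  have "A $$ (i, j) = (A *\<^sub>v unit_vec nc j) $ i" using A B i j by simp
  also have "\<dots> = (B *\<^sub>v unit_vec nc j) $ i" unfolding unit eq ..
  also have "\<dots> = B $$ (i, j)" using A B i j by simp
  finally show "A $$ (i, j) = B $$ (i, j)" .
qed (use A B in auto)

lemma index_mat_mult_vec_sum: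
  "r < nr \<Longrightarrow> (mat nr nc f *\<^sub>v vec nc x) $ r = (\<Sum>c<nc. f (r, c) * (x c :: 'a :: comm_semiring_0))"
  by (simp add: scalar_prod_def row_def lessThan_atLeast0)

lemma sum_if_eq_lessThan:
  "(\<Sum>c < (N::nat). if c = a then g c else (0 :: 'a :: comm_monoid_add)) = (if a < N then g a else 0)"
  by (subst sum.delta) auto

lemma vec_index_eta: "v \<in> carrier_vec m \<Longrightarrow> vec m (\<lambda>j. v $ j) = v"
  by auto

subsection \<open>The matrices of the generators\<close>

definition reduced_burau_mat :: "nat \<Rightarrow> complex \<Rightarrow> complex \<Rightarrow> nat \<Rightarrow> complex mat" where
  "reduced_burau_mat n q1 q2 i = mat (n - 1) (n - 1) (\<lambda>(r, c).
     if r = i then (if c + 1 = i then q1 else if c = i then q2 else if c = i + 1 then - q2 else 0)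
     else if r = c then q1 else 0)"

definition burau_coords :: "complex \<Rightarrow> complex \<Rightarrow> nat \<Rightarrow> (nat \<Rightarrow> complex) \<Rightarrow> nat \<Rightarrow> complex" where
  "burau_coords q1 q2 i y r =
     (if r = i then (q1 + q2) * y i - q2 * y (i + 1) else if r = i + 1 then q1 * y i else q1 * y r)"

definition F_basis_coords :: "nat \<Rightarrow> complex \<Rightarrow> complex \<Rightarrow> (nat \<Rightarrow> complex) \<Rightarrow> nat \<Rightarrow> complex" where
  "F_basis_coords N q1 q2 x r = (if r < N then q2 * x r else 0) + (if 1 \<le> r then q1 * x (r - 1) else 0)"

definition reduced_burau_coords ::
  "nat \<Rightarrow> complex \<Rightarrow> complex \<Rightarrow> nat \<Rightarrow> (nat \<Rightarrow> complex) \<Rightarrow> nat \<Rightarrow> complex" where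
  "reduced_burau_coords N q1 q2 i x r =
     (if r = i then (if 1 \<le> i then q1 * x (i - 1) else 0) + q2 * x i - (if i + 1 < N then q2 * x (i + 1) else 0)
      else q1 * x r)"

lemma reduced_burau_mat_carrier: "reduced_burau_mat n q1 q2 i \<in> carrier_mat (n - 1) (n - 1)"
  by (simp add: reduced_burau_mat_def)

lemma burau_mat_mult_vec:
  assumes "i + 1 < n"
  shows "burau_mat n q1 q2 i *\<^sub>v vec n y = vec n (burau_coords q1 q2 i y)"
proof (rule eq_vecI)
  fix r assume "r < dim_vec (vec n (burau_coords q1 q2 i y))"
  then have r: "r < n" by simp
  have summand: "\<And>c. (case (r, c) of (r, c) \<Rightarrow>
      if c = i then (if r = i then q1 + q2 else if r = i + 1 then q1 else 0)
      else if c = i + 1 then (if r = i then - q2 else 0)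
      else if r = c then q1 else 0) * y c =
     (if c = i then (if r = i then q1 + q2 else if r = i + 1 then q1 else 0) * y c else 0)
     + (if c = i + 1 then (if r = i then - q2 else 0) * y c else 0)
     + (if c = r then (if r \<noteq> i \<and> r \<noteq> i + 1 then q1 * y c else 0) else 0)"
    by auto
  show "(burau_mat n q1 q2 i *\<^sub>v vec n y) $ r = vec n (burau_coords q1 q2 i y) $ r"
    unfolding burau_mat_def index_mat_mult_vec_sum[OF r] summand
    using r assms by (simp add: sum.distrib sum_if_eq_lessThan burau_coords_def)
qed (simp add: burau_mat_def)

lemma F_basis_mult_vec:
  assumes "n \<ge> 1"
  shows "F_basis n q1 q2 *\<^sub>v vec (n - 1) x = vec n (F_basis_coords (n - 1) q1 q2 x)"
proof (rule eq_vecI)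
  fix r assume "r < dim_vec (vec n (F_basis_coords (n - 1) q1 q2 x))"
  then have r: "r < n" by simp
  have summand: "\<And>c. (case (r, c) of (r, j) \<Rightarrow> if r = j then q2 else if r = j + 1 then q1 else 0) * x c =
     (if c = r then q2 * x c else 0) + (if c = r - 1 then (if 1 \<le> r then q1 * x c else 0) else 0)"
    by auto
  show "(F_basis n q1 q2 *\<^sub>v vec (n - 1) x) $ r = vec n (F_basis_coords (n - 1) q1 q2 x) $ r"
    unfolding F_basis_def index_mat_mult_vec_sum[OF r] summand
    using r assms by (auto simp: sum.distrib sum_if_eq_lessThan F_basis_coords_def)
qed (simp add: F_basis_def)

lemma reduced_burau_mat_mult_vec:
  assumes i: "i < n - 1"
  shows "reduced_burau_mat n q1 q2 i *\<^sub>v vec (n - 1) x = vec (n - 1) (reduced_burau_coords (n - 1) q1 q2 i x)"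
proof (rule eq_vecI)
  fix r assume "r < dim_vec (vec (n - 1) (reduced_burau_coords (n - 1) q1 q2 i x))"
  then have r: "r < n - 1" by simp
  let ?entry = "\<lambda>(r, c). if r = i then (if c + 1 = i then q1 else if c = i then q2 else if c = i + 1 then - q2 else 0)
      else if r = c then q1 else 0"
  show "(reduced_burau_mat n q1 q2 i *\<^sub>v vec (n - 1) x) $ r =
      vec (n - 1) (reduced_burau_coords (n - 1) q1 q2 i x) $ r"
  proof (cases "r = i")
    case True
    have summand: "\<And>c. ?entry (r, c) * x c =
      (if c = i - 1 then (if 1 \<le> i then q1 * x c else 0) else 0) + (if c = i then q2 * x c else 0)
       + (if c = i + 1 then - q2 * x c else 0)"
      using True by auto
    show ?thesis unfolding reduced_burau_mat_def index_mat_mult_vec_sum[OF r] summand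
      using r True i by (auto simp: sum.distrib sum_if_eq_lessThan reduced_burau_coords_def)
  next
    case False
    have summand: "\<And>c. ?entry (r, c) * x c = (if c = r then q1 * x c else 0)"
      using False by auto
    show ?thesis unfolding reduced_burau_mat_def index_mat_mult_vec_sum[OF r] summand
      using r False i by (simp add: sum_if_eq_lessThan reduced_burau_coords_def)
  qed
qed (simp add: reduced_burau_mat_def)

lemma reduced_burau_mat_mult_carrier_vec:
  assumes "i < n - 1" "v \<in> carrier_vec (n - 1)"
  shows "reduced_burau_mat n q1 q2 i *\<^sub>v v = vec (n - 1) (reduced_burau_coords (n - 1) q1 q2 i (\<lambda>j. v $ j))"
  using reduced_burau_mat_mult_vec[OF assms(1)] vec_index_eta[OF assms(2)] by metis

lemma burau_coords_F_basis_coords: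
  assumes "i + 1 < n" "r < n"
  shows "burau_coords q1 q2 i (F_basis_coords (n - 1) q1 q2 x) r =
    F_basis_coords (n - 1) q1 q2 (reduced_burau_coords (n - 1) q1 q2 i x) r"
  using assms by (auto simp: burau_coords_def F_basis_coords_def reduced_burau_coords_def algebra_simps)

lemma burau_mat_mult_F_basis:
  assumes n: "n \<ge> 2" and i: "i < n - 1"
  shows "burau_mat n q1 q2 i * F_basis n q1 q2 = F_basis n q1 q2 * reduced_burau_mat n q1 q2 i"
proof (rule mat_eq_by_mult_vec)
  have B: "burau_mat n q1 q2 i \<in> carrier_mat n n" and F: "F_basis n q1 q2 \<in> carrier_mat n (n - 1)"
    by (simp_all add: burau_mat_def F_basis_def)
  note R = reduced_burau_mat_carrier
  show "burau_mat n q1 q2 i * F_basis n q1 q2 \<in> carrier_mat n (n - 1)"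
    "F_basis n q1 q2 * reduced_burau_mat n q1 q2 i \<in> carrier_mat n (n - 1)"
    using B F R by auto
  fix x
  have n1: "n \<ge> 1" and i1: "i + 1 < n" using n i by auto
  have "(burau_mat n q1 q2 i * F_basis n q1 q2) *\<^sub>v vec (n - 1) x
      = burau_mat n q1 q2 i *\<^sub>v (F_basis n q1 q2 *\<^sub>v vec (n - 1) x)"
    by (rule assoc_mult_mat_vec[OF B F vec_carrier])
  also have "\<dots> = vec n (burau_coords q1 q2 i (F_basis_coords (n - 1) q1 q2 x))"
    by (simp only: F_basis_mult_vec[OF n1] burau_mat_mult_vec[OF i1])
  also have "\<dots> = vec n (F_basis_coords (n - 1) q1 q2 (reduced_burau_coords (n - 1) q1 q2 i x))"
    using i1 burau_coords_F_basis_coords[OF i1] by auto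
  also have "\<dots> = F_basis n q1 q2 *\<^sub>v (reduced_burau_mat n q1 q2 i *\<^sub>v vec (n - 1) x)"
    by (simp only: F_basis_mult_vec[OF n1] reduced_burau_mat_mult_vec[OF i])
  also have "\<dots> = (F_basis n q1 q2 * reduced_burau_mat n q1 q2 i) *\<^sub>v vec (n - 1) x"
    by (rule assoc_mult_mat_vec[OF F R vec_carrier, symmetric])
  finally show "(burau_mat n q1 q2 i * F_basis n q1 q2) *\<^sub>v vec (n - 1) x
      = (F_basis n q1 q2 * reduced_burau_mat n q1 q2 i) *\<^sub>v vec (n - 1) x" .
qed

lemma F_basis_coords_inj:
  assumes q2: "q2 \<noteq> 0" and eq: "\<forall>r < Suc N. F_basis_coords N q1 q2 x r = F_basis_coords N q1 q2 y r"
    and r: "r < N"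
  shows "x r = y r"
  using r
proof (induction r)
  case 0
  then show ?case using eq[rule_format, of 0] q2 by (simp add: F_basis_coords_def)
next
  case (Suc r)
  then show ?case using eq[rule_format, of "Suc r"] q2 by (simp add: F_basis_coords_def)
qed

lemma F_basis_mult_vec_inj:
  assumes q2: "q2 \<noteq> 0" and n: "n \<ge> 1"
    and u: "u \<in> carrier_vec (n - 1)" and w: "w \<in> carrier_vec (n - 1)"
    and eq: "F_basis n q1 q2 *\<^sub>v u = F_basis n q1 q2 *\<^sub>v w"
  shows "u = w"
proof -
  let ?U = "F_basis_coords (n - 1) q1 q2 (\<lambda>j. u $ j)" and ?W = "F_basis_coords (n - 1) q1 q2 (\<lambda>j. w $ j)"
  have "F_basis n q1 q2 *\<^sub>v u = vec n ?U" "F_basis n q1 q2 *\<^sub>v w = vec n ?W"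
    using F_basis_mult_vec[OF n, of q1 q2 "\<lambda>j. u $ j"] F_basis_mult_vec[OF n, of q1 q2 "\<lambda>j. w $ j"]
    unfolding vec_index_eta[OF u] vec_index_eta[OF w] .
  then have "vec n ?U = vec n ?W" using eq by simp
  have coords: "\<forall>r < Suc (n - 1). ?U r = ?W r"
  proof (intro allI impI)
    fix r assume "r < Suc (n - 1)"
    then have "r < n" using n by simp
    then show "?U r = ?W r" using arg_cong[OF \<open>vec n ?U = vec n ?W\<close>, of "\<lambda>v. v $ r"] by simp
  qed
  have "u $ r = w $ r" if "r < n - 1" for r
    using F_basis_coords_inj[OF q2 coords that] by simp
  then show ?thesis using u w by (intro eq_vecI) auto
qed

lemma F_basis_mult_left_cancel:
  assumes q2: "q2 \<noteq> 0" and n: "n \<ge> 1"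
    and M: "M \<in> carrier_mat (n - 1) k" and M': "M' \<in> carrier_mat (n - 1) k"
    and eq: "F_basis n q1 q2 * M = F_basis n q1 q2 * M'"
  shows "M = M'"
proof (rule mat_eq_by_mult_vec[OF M M'])
  fix x
  have F: "F_basis n q1 q2 \<in> carrier_mat n (n - 1)" by (simp add: F_basis_def)
  have "F_basis n q1 q2 *\<^sub>v (M *\<^sub>v vec k x) = F_basis n q1 q2 *\<^sub>v (M' *\<^sub>v vec k x)"
    using eq assoc_mult_mat_vec[OF F M vec_carrier] assoc_mult_mat_vec[OF F M' vec_carrier] by simp
  then show "M *\<^sub>v vec k x = M' *\<^sub>v vec k x"
    using F_basis_mult_vec_inj[OF q2 n] M M' by simp
qed

lemma rho_gen_eq_reduced_burau_mat:
  assumes n: "n \<ge> 2" and q2: "q2 \<noteq> 0" and i: "i < n - 1"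
  shows "rho_gen n q1 q2 i = reduced_burau_mat n q1 q2 i"
  unfolding rho_gen_def
proof (rule the_equality)
  show "reduced_burau_mat n q1 q2 i \<in> carrier_mat (n - 1) (n - 1) \<and>
      burau_mat n q1 q2 i * F_basis n q1 q2 = F_basis n q1 q2 * reduced_burau_mat n q1 q2 i"
    using reduced_burau_mat_carrier burau_mat_mult_F_basis[OF n i] by blast
  fix M assume M: "M \<in> carrier_mat (n - 1) (n - 1) \<and> burau_mat n q1 q2 i * F_basis n q1 q2 = F_basis n q1 q2 * M"
  then have "F_basis n q1 q2 * M = F_basis n q1 q2 * reduced_burau_mat n q1 q2 i"
    using burau_mat_mult_F_basis[OF n i] by simp
  then show "M = reduced_burau_mat n q1 q2 i"
    using F_basis_mult_left_cancel[OF q2 _ _ reduced_burau_mat_carrier] M n by simp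
qed

lemma reduced_burau_coords_eq_0:
  assumes q1: "q1 \<noteq> 0" and q2: "q2 \<noteq> 0" and i: "i < N"
    and zero: "\<forall>r < N. reduced_burau_coords N q1 q2 i x r = 0" and r: "r < N"
  shows "x r = 0"
proof -
  have off_i: "x r = 0" if "r < N" "r \<noteq> i" for r
    using zero[rule_format, OF that(1)] that q1 by (simp add: reduced_burau_coords_def)
  then have "reduced_burau_coords N q1 q2 i x i = q2 * x i"
    using i by (auto simp: reduced_burau_coords_def)
  then have "x i = 0" using zero i q2 by auto
  then show ?thesis using off_i r by blast
qed

lemma det_reduced_burau_mat_nonzero:
  assumes q1: "q1 \<noteq> 0" and q2: "q2 \<noteq> 0" and i: "i < n - 1"
  shows "det (reduced_burau_mat n q1 q2 i) \<noteq> 0"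
proof
  assume "det (reduced_burau_mat n q1 q2 i) = 0"
  then obtain v where v: "v \<in> carrier_vec (n - 1)" "v \<noteq> 0\<^sub>v (n - 1)"
    and kernel: "reduced_burau_mat n q1 q2 i *\<^sub>v v = 0\<^sub>v (n - 1)"
    using det_0_iff_vec_prod_zero[OF reduced_burau_mat_carrier] by blast
  have "\<forall>r < n - 1. reduced_burau_coords (n - 1) q1 q2 i (\<lambda>j. v $ j) r = 0"
  proof (intro allI impI)
    fix r assume "r < n - 1"
    then show "reduced_burau_coords (n - 1) q1 q2 i (\<lambda>j. v $ j) r = 0"
      using arg_cong[OF kernel, of "\<lambda>w. w $ r"] reduced_burau_mat_mult_carrier_vec[OF i v(1)] by simp
  qed
  then have "v = 0\<^sub>v (n - 1)"
    using reduced_burau_coords_eq_0[OF q1 q2 i] v(1) by (intro eq_vecI) auto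
  with v(2) show False ..
qed

lemma burau_image_GL:
  assumes n: "n \<ge> 2" and q1: "q1 \<noteq> 0" and q2: "q2 \<noteq> 0" and g: "g \<in> burau_image n q1 q2"
  shows "g \<in> carrier_mat (n - 1) (n - 1) \<and> det g \<noteq> 0"
  using g
proof (induction rule: burau_image.induct)
  case one
  then show ?case by simp
next
  case (gen g i)
  then show ?case
    using rho_gen_eq_reduced_burau_mat[OF n q2 gen(2)] det_reduced_burau_mat_nonzero[OF q1 q2 gen(2)]
      reduced_burau_mat_carrier[of n q1 q2 i]
    by (simp add: det_mult)
next
  case (gen_inv g i h)
  have "h * reduced_burau_mat n q1 q2 i = 1\<^sub>m (n - 1)"
    using gen_inv(4) rho_gen_eq_reduced_burau_mat[OF n q2 gen_inv(2)] gen_inv(3)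
    by (simp add: inverts_mat_def)
  then have "det (h * reduced_burau_mat n q1 q2 i) = 1" by simp
  then have "det h * det (reduced_burau_mat n q1 q2 i) = 1"
    by (simp add: det_mult[OF gen_inv(3) reduced_burau_mat_carrier])
  then have "det h \<noteq> 0" by auto
  then show ?case using gen_inv det_mult[OF gen_inv(3), of g] by auto
qed

lemma foldr_reduced_burau_mat_carrier:
  assumes "g \<in> carrier_mat (n - 1) (n - 1)"
  shows "foldr (\<lambda>i h. reduced_burau_mat n q1 q2 i * h) ws g \<in> carrier_mat (n - 1) (n - 1)"
proof (induction ws)
  case Nil
  then show ?case using assms by simp
next
  case (Cons i ws)
  then show ?case using mult_carrier_mat[OF reduced_burau_mat_carrier] by simp
qed

lemma foldr_reduced_burau_mat_in_burau_image:
  assumes n: "n \<ge> 2" and q2: "q2 \<noteq> 0" and g: "g \<in> burau_image n q1 q2"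
    and ws: "set ws \<subseteq> {..<n - 1}"
  shows "foldr (\<lambda>i h. reduced_burau_mat n q1 q2 i * h) ws g \<in> burau_image n q1 q2"
  using ws
proof (induction ws)
  case Nil
  then show ?case using g by simp
next
  case (Cons i ws)
  then have i: "i < n - 1" by auto
  with Cons burau_image.gen[of _ n q1 q2 i] show ?case
    by (simp add: rho_gen_eq_reduced_burau_mat[OF n q2 i])
qed

lemma foldr_reduced_burau_mat_mult_vec:
  assumes g: "g \<in> carrier_mat (n - 1) (n - 1)" and w: "w \<in> carrier_vec (n - 1)"
  shows "foldr (\<lambda>i h. reduced_burau_mat n q1 q2 i * h) ws g *\<^sub>v w =
    foldr (\<lambda>i v. reduced_burau_mat n q1 q2 i *\<^sub>v v) ws (g *\<^sub>v w)"
proof (induction ws)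
  case Nil
  then show ?case by simp
next
  case (Cons i ws)
  have "foldr (\<lambda>i h. reduced_burau_mat n q1 q2 i * h) ws g \<in> carrier_mat (n - 1) (n - 1)"
    by (rule foldr_reduced_burau_mat_carrier[OF g])
  with Cons w reduced_burau_mat_carrier[of n q1 q2 i] show ?case by simp
qed

subsection \<open>The central element\<close>

lemma foldr_concat_replicate_rev: "foldr f (concat (replicate k (rev xs))) = fold f xs ^^ k"
  by (induction k) (simp_all add: foldr_conv_fold)

(* Folding over [0..<m] applies rho(sigma_1), ..., rho(sigma_m) in turn; for m = N it applies
   rho(delta). *)
lemma fold_reduced_burau_upt:
  assumes v: "v \<in> carrier_vec N" and m: "m \<le> N"
  shows "fold (\<lambda>i v. reduced_burau_mat (Suc N) q1 q2 i *\<^sub>v v) [0..<m] v =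
    vec N (\<lambda>r. if r < m then q1 ^ (m - 1) * q2 * (v $ 0 - (if r + 1 < N then v $ (r + 1) else 0))
                else q1 ^ m * v $ r)"
  using m
proof (induction m)
  case 0
  then show ?case using v by auto
next
  case (Suc m)
  then have m: "m < N" by simp
  show ?case
    using Suc m by (simp add: reduced_burau_mat_mult_carrier_vec)
      (intro eq_vecI; cases m; auto simp: reduced_burau_coords_def algebra_simps)
qed

lemma delta_mult_vec:
  assumes N: "N \<ge> 1"
  shows "fold (\<lambda>i v. reduced_burau_mat (Suc N) q1 q2 i *\<^sub>v v) [0..<N] (vec N x) =
    vec N (\<lambda>r. q1 ^ (N - 1) * q2 * (x 0 - (if r + 1 < N then x (r + 1) else 0)))"
  unfolding fold_reduced_burau_upt[OF vec_carrier le_refl] using N by (intro eq_vecI) auto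

(* The homogeneous coordinates (v_0, ..., v_(N-1), 0) of v: up to the factor -q1^(N-1) q2,
   rho(delta) shifts them cyclically, modulo constant vectors. *)
definition cyclic_coords :: "nat \<Rightarrow> complex vec \<Rightarrow> nat \<Rightarrow> complex" where
  "cyclic_coords N v j = (if j < N then v $ j else 0)"

lemma delta_power_mult_vec:
  assumes N: "N \<ge> 1" and v: "v \<in> carrier_vec N"
  shows "(fold (\<lambda>i v. reduced_burau_mat (Suc N) q1 q2 i *\<^sub>v v) [0..<N] ^^ m) v =
    vec N (\<lambda>r. (- (q1 ^ (N - 1) * q2)) ^ m *
      (cyclic_coords N v ((r + m) mod Suc N) - cyclic_coords N v ((N + m) mod Suc N)))"
proof (induction m)
  case 0
  show ?case using v by (intro eq_vecI) (auto simp: cyclic_coords_def)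
next
  case (Suc m)
  define b where "b = q1 ^ (N - 1) * q2"
  define Y where "Y = cyclic_coords N v"
  define P where "P = (\<lambda>r. (- b) ^ m * (Y ((r + m) mod Suc N) - Y ((N + m) mod Suc N)))"
  have shift: "(N + Suc m) mod Suc N = m mod Suc N"
    by (metis add_Suc add_Suc_right mod_add_self1)
  have step: "b * (P 0 - (if r + 1 < N then P (r + 1) else 0)) =
      (- b) ^ Suc m * (Y ((r + Suc m) mod Suc N) - Y ((N + Suc m) mod Suc N))" if "r < N" for r
  proof (cases "r + 1 < N")
    case True
    then show ?thesis unfolding P_def shift by (simp add: algebra_simps)
  next
    case False
    then have "r + Suc m = N + m" using that by simp
    then have last: "Y ((r + Suc m) mod Suc N) = Y ((N + m) mod Suc N)" by (simp only:)
    show ?thesis unfolding P_def shift last using False by (simp add: algebra_simps)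
  qed
  have "(fold (\<lambda>i v. reduced_burau_mat (Suc N) q1 q2 i *\<^sub>v v) [0..<N] ^^ Suc m) v =
      fold (\<lambda>i v. reduced_burau_mat (Suc N) q1 q2 i *\<^sub>v v) [0..<N] (vec N P)"
    unfolding funpow.simps(2) comp_apply Suc.IH P_def b_def Y_def ..
  also have "\<dots> = vec N (\<lambda>r. b * (P 0 - (if r + 1 < N then P (r + 1) else 0)))"
    by (simp only: delta_mult_vec[OF N] b_def)
  also have "\<dots> = vec N (\<lambda>r. (- b) ^ Suc m * (Y ((r + Suc m) mod Suc N) - Y ((N + Suc m) mod Suc N)))"
    using step by (intro eq_vecI) auto
  finally show ?case unfolding b_def Y_def .
qed

lemma delta_power_n_mult_vec:
  assumes N: "N \<ge> 1" and v: "v \<in> carrier_vec N"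
  shows "(fold (\<lambda>i v. reduced_burau_mat (Suc N) q1 q2 i *\<^sub>v v) [0..<N] ^^ Suc N) v =
    (- (q1 ^ (N - 1) * q2)) ^ Suc N \<cdot>\<^sub>v v"
proof -
  have "(r + Suc N) mod Suc N = r" "(N + Suc N) mod Suc N = N" if "r < N" for r
    by (subst mod_add_self2; use that in simp)+
  then show ?thesis
    unfolding delta_power_mult_vec[OF N v] using v
    by (intro eq_vecI) (auto simp: cyclic_coords_def)
qed

lemma central_scalar_smult_in_burau_image:
  assumes N: "N \<ge> 1" and q1: "q1 \<noteq> 0" and q2: "q2 \<noteq> 0" and g: "g \<in> burau_image (Suc N) q1 q2"
  shows "(- (q1 ^ (N - 1) * q2)) ^ Suc N \<cdot>\<^sub>m g \<in> burau_image (Suc N) q1 q2"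
proof -
  define ws where "ws = concat (replicate (Suc N) (rev [0..<N]))"
  let ?c = "(- (q1 ^ (N - 1) * q2)) ^ Suc N"
  let ?w = "foldr (\<lambda>i h. reduced_burau_mat (Suc N) q1 q2 i * h) ws g"
  have n: "Suc N \<ge> 2" using N by simp
  have ws: "set ws \<subseteq> {..<Suc N - 1}" unfolding ws_def by auto
  have gc: "g \<in> carrier_mat N N" using burau_image_GL[OF n q1 q2 g] by simp
  have "?w = ?c \<cdot>\<^sub>m g"
  proof (rule mat_eq_by_mult_vec)
    show "?w \<in> carrier_mat N N" using foldr_reduced_burau_mat_carrier[of g "Suc N"] gc by simp
    show "?c \<cdot>\<^sub>m g \<in> carrier_mat N N" using gc by simp
    fix x
    have "?w *\<^sub>v vec N x = foldr (\<lambda>i v. reduced_burau_mat (Suc N) q1 q2 i *\<^sub>v v) ws (g *\<^sub>v vec N x)"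
      by (rule foldr_reduced_burau_mat_mult_vec) (use gc in auto)
    also have "\<dots> = (fold (\<lambda>i v. reduced_burau_mat (Suc N) q1 q2 i *\<^sub>v v) [0..<N] ^^ Suc N) (g *\<^sub>v vec N x)"
      by (simp only: ws_def foldr_concat_replicate_rev)
    also have "\<dots> = ?c \<cdot>\<^sub>v (g *\<^sub>v vec N x)"
      by (rule delta_power_n_mult_vec[OF N]) (use gc in simp)
    also have "\<dots> = (?c \<cdot>\<^sub>m g) *\<^sub>v vec N x"
      using gc by (intro eq_vecI) auto
    finally show "?w *\<^sub>v vec N x = (?c \<cdot>\<^sub>m g) *\<^sub>v vec N x" .
  qed
  moreover have "?w \<in> burau_image (Suc N) q1 q2"
    by (rule foldr_reduced_burau_mat_in_burau_image[OF n q2 g ws])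
  ultimately show ?thesis by simp
qed

subsection \<open>Zariski closure\<close>

lemma root_of_unity_powerD:
  assumes "root_of_unity (z ^ m)" "m > 0"
  shows "root_of_unity z"
  using assms unfolding root_of_unity_def by (metis nat_0_less_mult_iff power_mult)

lemma root_of_unity_uminusD:
  assumes "root_of_unity (- z)"
  shows "root_of_unity z"
proof -
  obtain k where "k > 0" "(- z) ^ k = 1" using assms unfolding root_of_unity_def by blast
  have "z ^ (2 * k) = (- z) ^ (k * 2)" by (simp add: power_minus_even mult.commute)
  also have "\<dots> = 1" by (simp add: power_mult \<open>(- z) ^ k = 1\<close>)
  finally have "z ^ (2 * k) = 1" .
  then show ?thesis
    using \<open>k > 0\<close> unfolding root_of_unity_def by (intro exI[of _ "2 * k"]) simp
qed

lemma inj_power_not_root_of_unity: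
  assumes c: "c \<noteq> 0" "\<not> root_of_unity c"
  shows "inj (\<lambda>k :: nat. c ^ k)"
proof -
  have "c ^ i \<noteq> c ^ j" if "i < j" for i j :: nat
  proof
    assume "c ^ i = c ^ j"
    then have "c ^ (j - i) = 1"
      using that c(1) by (metis le_add_diff_inverse less_imp_le_nat mult_cancel_left1 power_add power_not_zero)
    with that c(2) show False unfolding root_of_unity_def using zero_less_diff by blast
  qed
  then show ?thesis by (metis injI linorder_neqE_nat)
qed

lemma poly_fun_smult_mat_poly:
  assumes "p \<in> poly_fun N" and g: "g \<in> carrier_mat N N"
  shows "\<exists>P. \<forall>z. p (z \<cdot>\<^sub>m g) = poly P z"
  using assms(1)
proof (induction rule: poly_fun.induct)
  case (const c)
  show ?case by (intro exI[of _ "[:c:]"]) simp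
next
  case (entry i j)
  then show ?case using g by (intro exI[of _ "[:0, g $$ (i, j):]"]) simp
next
  case (add p p')
  then obtain P P' where "\<forall>z. p (z \<cdot>\<^sub>m g) = poly P z" "\<forall>z. p' (z \<cdot>\<^sub>m g) = poly P' z" by blast
  then show ?case by (intro exI[of _ "P + P'"]) simp
next
  case (mult p p')
  then obtain P P' where "\<forall>z. p (z \<cdot>\<^sub>m g) = poly P z" "\<forall>z. p' (z \<cdot>\<^sub>m g) = poly P' z" by blast
  then show ?case by (intro exI[of _ "P * P'"]) simp
qed

lemma smult_mat_in_zariski_closure_GL:
  assumes GL: "\<And>g. g \<in> S \<Longrightarrow> g \<in> carrier_mat N N \<and> det g \<noteq> 0"
    and c: "c \<noteq> 0" "\<not> root_of_unity c"
    and closed: "\<And>g. g \<in> S \<Longrightarrow> c \<cdot>\<^sub>m g \<in> S"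
    and g: "g \<in> S" and z: "z \<noteq> 0"
  shows "z \<cdot>\<^sub>m g \<in> zariski_closure_GL N S"
proof -
  have gc: "g \<in> carrier_mat N N" and det: "det g \<noteq> 0" using GL[OF g] by auto
  have powers: "c ^ k \<cdot>\<^sub>m g \<in> S" for k
  proof (induction k)
    case 0
    have "1 \<cdot>\<^sub>m g = g" using gc by (intro eq_matI) auto
    then show ?case using g by simp
  next
    case (Suc k)
    have "c ^ Suc k \<cdot>\<^sub>m g = c \<cdot>\<^sub>m (c ^ k \<cdot>\<^sub>m g)" by (intro eq_matI) auto
    then show ?case using closed[OF Suc] by simp
  qed
  have "p (z \<cdot>\<^sub>m g) = 0" if p: "p \<in> poly_fun N" and vanish: "\<forall>B \<in> S. p B = 0" for p
  proof -
    obtain P where P: "\<And>x. p (x \<cdot>\<^sub>m g) = poly P x" using poly_fun_smult_mat_poly[OF p gc] by blast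
    have "poly P (c ^ k) = 0" for k
      using vanish powers[of k] P[of "c ^ k"] by simp
    then have "range (\<lambda>k :: nat. c ^ k) \<subseteq> {x. poly P x = 0}" by auto
    moreover have "infinite (range (\<lambda>k :: nat. c ^ k))"
      using inj_power_not_root_of_unity[OF c] by (simp add: range_inj_infinite)
    ultimately have "P = 0" using poly_roots_finite finite_subset by blast
    then show ?thesis using P by simp
  qed
  then show ?thesis using gc det z by (simp add: zariski_closure_GL_def)
qed

theorem lemmaA2:
  fixes n :: nat and q1 q2 :: complex
  assumes "n \<ge> 2"
    and "q1 * q2 \<noteq> 0"
    and "\<not> root_of_unity (- q2 / q1)"
    and "\<not> root_of_unity (q1 ^ (n - 2) * q2)"
  shows "\<forall>g \<in> burau_image n q1 q2. \<forall>z :: complex. z \<noteq> 0 \<longrightarrow>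
           z \<cdot>\<^sub>m g \<in> zariski_closure_GL (n - 1) (burau_image n q1 q2)"
proof -
  have q1: "q1 \<noteq> 0" and q2: "q2 \<noteq> 0" using assms(2) by auto
  obtain N where nN: "n = Suc N" and N: "N \<ge> 1" using assms(1) by (cases n) auto
  define c where "c = (- (q1 ^ (N - 1) * q2)) ^ Suc N"
  have "c \<noteq> 0" using q1 q2 by (simp add: c_def)
  moreover have "\<not> root_of_unity c"
    using assms(4) root_of_unity_powerD[of "- (q1 ^ (N - 1) * q2)" "Suc N"] root_of_unity_uminusD
    by (auto simp: c_def nN numeral_2_eq_2)
  moreover have "c \<cdot>\<^sub>m g \<in> burau_image n q1 q2" if "g \<in> burau_image n q1 q2" for g
    using central_scalar_smult_in_burau_image[OF N q1 q2] that by (simp add: c_def nN)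
  ultimately show ?thesis
    using smult_mat_in_zariski_closure_GL burau_image_GL[OF assms(1) q1 q2] by blast
qed

end
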